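(* Let $X,Y$ be Banach lattices and $S\colon X\to Y$ bounded and convex. Then $S$ is Lipschitz on bounded subsets: for every $r>0$ there exists $L>0$ with $\|Sx-Sy\|\le L\|x-y\|$ for all $x,y\in X$ with $\|x\|\le r$, $\|y\|\le r$.
   Context: An operator $S\colon X\to Y$ is convex if $S(\lambda x+(1-\lambda)y)\le\lambda Sx+(1-\lambda)Sy$ for all $x,y\in X$, $\lambda\in[0,1]$, and bounded if $\sup_{\|x\|\le r}\|Sx\|<\infty$ for every $r>0$. *)

theory Defs
  imports "HOL-Analysis.Analysis"
begin

text \<open>A (real) Banach lattice: a real Banach space carrying a lattice order that is
compatible with the vector structure (translation invariant, positive cone closed under
nonnegative scalars) and whose norm is a lattice norm:
|x| \<le> |y| implies norm x \<le> norm y, where |x| = sup x (-x).\<close>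

class banach_lattice = banach + lattice + ordered_ab_group_add +
  assumes scaleR_nonneg_nonneg_bl: "0 \<le> x \<Longrightarrow> 0 \<le> a \<Longrightarrow> 0 \<le> a *\<^sub>R x"
  assumes norm_lattice_mono: "sup x (- x) \<le> sup y (- y) \<Longrightarrow> norm x \<le> norm y"

definition convex_operator :: "('a::real_vector \<Rightarrow> 'b::{real_vector, order}) \<Rightarrow> bool" where
  "convex_operator S \<longleftrightarrow>
     (\<forall>x y. \<forall>l::real. 0 \<le> l \<and> l \<le> 1 \<longrightarrow>
        S (l *\<^sub>R x + (1 - l) *\<^sub>R y) \<le> l *\<^sub>R S x + (1 - l) *\<^sub>R S y)"

definition bounded_operator :: "('a::real_normed_vector \<Rightarrow> 'b::real_normed_vector) \<Rightarrow> bool" where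
  "bounded_operator S \<longleftrightarrow> (\<forall>r>0. \<exists>M. \<forall>x. norm x \<le> r \<longrightarrow> norm (S x) \<le> M)"

instance real :: banach_lattice
  by standard (auto simp: sup_real_def)

end

theory Submission
  imports Defs "HOL-Library.Lattice_Algebras"
begin

text \<open>Write \<open>\<delta> = norm (x - y)\<close> and extend the segment from \<open>y\<close> through \<open>x\<close> by length \<open>r\<close> to
  \<open>z = x + (r/\<delta>)(x - y)\<close>. Then \<open>x\<close> is the convex combination \<open>\<lambda> z + (1 - \<lambda>) y\<close> with
  \<open>\<lambda> = \<delta>/(\<delta> + r) \<le> \<delta>/r\<close>, so convexity gives \<open>S x - S y \<le> \<lambda> (S z - S y)\<close>; exchanging \<open>x\<close> and \<open>y\<close>
  bounds \<open>S x - S y\<close> from below in the same way. Both extended points stay in the ball of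
  radius \<open>2r\<close>, on which \<open>S\<close> is bounded by some \<open>M\<close>. In a Banach lattice, an element squeezed
  between \<open>-q\<close> and \<open>p\<close> has norm at most \<open>norm p + norm q\<close>, which yields
  \<open>norm (S x - S y) \<le> (4M/r) norm (x - y)\<close>.\<close>

context banach_lattice
begin

subclass lattice_ab_group_add ..

end

lemma sup_uminus_nonneg:
  fixes a :: "'a::lattice_ab_group_add"
  shows "0 \<le> sup a (- a)"
proof -
  have "a + - a \<le> sup a (- a) + sup a (- a)"
    by (rule add_mono) simp_all
  then show ?thesis
    by simp
qed

lemma sup_uminus_of_nonneg:
  fixes a :: "'a::lattice_ab_group_add"
  assumes "0 \<le> a"
  shows "sup a (- a) = a"
  using assms by (simp add: minus_le_self_iff sup_absorb1)

lemma norm_sup_uminus: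
  fixes x :: "'a::banach_lattice"
  shows "norm (sup x (- x)) = norm x"
proof -
  have "sup (sup x (- x)) (- sup x (- x)) = sup x (- x)"
    by (rule sup_uminus_of_nonneg[OF sup_uminus_nonneg])
  then show ?thesis
    by (intro antisym norm_lattice_mono) simp_all
qed

lemma norm_le_add_norm_of_bounds:
  fixes v p q :: "'a::banach_lattice"
  assumes "- q \<le> v" and "v \<le> p"
  shows "norm v \<le> norm p + norm q"
proof -
  let ?p = "sup p (- p)" and ?q = "sup q (- q)"
  have "v \<le> ?p + ?q"
    using \<open>v \<le> p\<close> sup_uminus_nonneg[of q]
    by (metis add_increasing2 le_supI1 order_refl)
  moreover have "- v \<le> ?p + ?q"
    using \<open>- q \<le> v\<close> sup_uminus_nonneg[of p]
    by (metis add_increasing minus_le_iff le_supI1 order_refl)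
  moreover have "sup (?p + ?q) (- (?p + ?q)) = ?p + ?q"
    by (intro sup_uminus_of_nonneg add_nonneg_nonneg sup_uminus_nonneg)
  ultimately have "sup v (- v) \<le> sup (?p + ?q) (- (?p + ?q))"
    by simp
  then have "norm v \<le> norm (?p + ?q)"
    by (rule norm_lattice_mono)
  also have "\<dots> \<le> norm ?p + norm ?q"
    by (rule norm_triangle_ineq)
  finally show ?thesis
    by (simp add: norm_sup_uminus)
qed

lemma convex_operator_diff_le:
  fixes S :: "'a::real_vector \<Rightarrow> 'b::{real_vector, ordered_ab_group_add}"
  assumes "convex_operator S" and "0 < t"
  shows "S x - S y \<le> (1 / (1 + t)) *\<^sub>R (S (x + t *\<^sub>R (x - y)) - S y)"
proof -
  define l where "l = 1 / (1 + t)"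
  define z where "z = x + t *\<^sub>R (x - y)"
  have "0 \<le> l" "l \<le> 1"
    using \<open>0 < t\<close> by (simp_all add: l_def)
  have "l * t = 1 - l"
    using \<open>0 < t\<close> by (simp add: l_def field_simps)
  have "l *\<^sub>R z + (1 - l) *\<^sub>R y = l *\<^sub>R x + (l * t) *\<^sub>R (x - y) + (1 - l) *\<^sub>R y"
    by (simp add: z_def scaleR_add_right)
  also have "\<dots> = x"
    by (simp add: \<open>l * t = 1 - l\<close> algebra_simps)
  finally have "l *\<^sub>R z + (1 - l) *\<^sub>R y = x" .
  then have "S x \<le> l *\<^sub>R S z + (1 - l) *\<^sub>R S y"
    using assms(1) \<open>0 \<le> l\<close> \<open>l \<le> 1\<close> unfolding convex_operator_def by metis
  then have "S x - S y \<le> l *\<^sub>R S z + (1 - l) *\<^sub>R S y - S y"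
    by (rule diff_right_mono)
  also have "\<dots> = l *\<^sub>R (S z - S y)"
    by (simp add: algebra_simps)
  finally show ?thesis
    by (simp add: l_def z_def)
qed

lemma convex_operator_lipschitz_on_ball:
  fixes S :: "'a::real_normed_vector \<Rightarrow> 'b::banach_lattice"
  assumes "convex_operator S" and "0 < r"
    and bounded: "\<And>z. norm z \<le> 2 * r \<Longrightarrow> norm (S z) \<le> M"
    and "norm x \<le> r" and "norm y \<le> r"
  shows "norm (S x - S y) \<le> 4 * M / r * norm (x - y)"
proof (cases "x = y")
  case False
  define d where "d = norm (x - y)"
  define t where "t = r / d"
  have "0 < d" "0 < t"
    using False \<open>0 < r\<close> by (simp_all add: d_def t_def)
  have extended_bound: "norm (S (u + t *\<^sub>R (u - v)) - S v) \<le> 2 * M"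
    if "norm u \<le> r" "norm v \<le> r" "norm (u - v) = d" for u v
  proof -
    have "norm (u + t *\<^sub>R (u - v)) \<le> norm u + t * norm (u - v)"
      using norm_triangle_ineq[of u "t *\<^sub>R (u - v)"] \<open>0 < t\<close> by simp
    also have "\<dots> \<le> 2 * r"
      using that \<open>0 < d\<close> by (simp add: t_def)
    finally have "norm (S (u + t *\<^sub>R (u - v))) \<le> M"
      by (rule bounded)
    moreover have "norm (S v) \<le> M"
      using that(2) \<open>0 < r\<close> by (intro bounded) simp
    ultimately show ?thesis
      using norm_triangle_ineq4[of "S (u + t *\<^sub>R (u - v))" "S v"] by linarith
  qed
  define l where "l = 1 / (1 + t)"
  define p where "p = l *\<^sub>R (S (x + t *\<^sub>R (x - y)) - S y)"
  define q where "q = l *\<^sub>R (S (y + t *\<^sub>R (y - x)) - S x)"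
  have "S x - S y \<le> p"
    unfolding p_def l_def by (rule convex_operator_diff_le[OF assms(1) \<open>0 < t\<close>])
  moreover have "- q \<le> S x - S y"
    using convex_operator_diff_le[OF assms(1) \<open>0 < t\<close>, of y x]
    by (simp add: q_def l_def minus_le_iff)
  ultimately have "norm (S x - S y) \<le> norm p + norm q"
    by (intro norm_le_add_norm_of_bounds)
  also have "\<dots> \<le> l * (2 * M) + l * (2 * M)"
    using extended_bound[of x y] extended_bound[of y x] assms(4,5) \<open>0 < t\<close>
    by (intro add_mono) (simp_all add: p_def q_def l_def d_def norm_minus_commute divide_right_mono)
  also have "\<dots> = l * (4 * M)"
    by simp
  also have "\<dots> \<le> d / r * (4 * M)"
  proof (rule mult_right_mono)
    show "l \<le> d / r"
      using \<open>0 < d\<close> \<open>0 < r\<close> by (simp add: l_def t_def field_simps)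
    show "0 \<le> 4 * M"
      using order_trans[OF norm_ge_zero extended_bound[of x y]] assms(4,5) by (simp add: d_def)
  qed
  finally show ?thesis
    by (simp add: d_def mult.commute)
qed simp

theorem corollaryA4:
  fixes S :: "'a::banach_lattice \<Rightarrow> 'b::banach_lattice"
  assumes "bounded_operator S" and "convex_operator S"
  shows "\<forall>r>0. \<exists>L>0. \<forall>x y. norm x \<le> r \<and> norm y \<le> r \<longrightarrow>
            norm (S x - S y) \<le> L * norm (x - y)"
proof (intro allI impI)
  fix r :: real
  assume "0 < r"
  then have "0 < 2 * r"
    by simp
  then obtain M where M: "\<And>z. norm z \<le> 2 * r \<Longrightarrow> norm (S z) \<le> M"
    using assms(1) unfolding bounded_operator_def by blast
  have "0 \<le> M"
    using order_trans[OF norm_ge_zero M[of 0]] \<open>0 < r\<close> by simp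
  show "\<exists>L>0. \<forall>x y. norm x \<le> r \<and> norm y \<le> r \<longrightarrow> norm (S x - S y) \<le> L * norm (x - y)"
  proof (intro exI conjI allI impI)
    show "0 < (4 * M + 1) / r"
      using \<open>0 \<le> M\<close> \<open>0 < r\<close> by simp
    fix x y :: 'a
    assume "norm x \<le> r \<and> norm y \<le> r"
    then have "norm (S x - S y) \<le> 4 * M / r * norm (x - y)"
      using convex_operator_lipschitz_on_ball[OF assms(2) \<open>0 < r\<close> M] by blast
    also have "\<dots> \<le> (4 * M + 1) / r * norm (x - y)"
      using \<open>0 < r\<close> by (intro mult_right_mono divide_right_mono) simp_all
    finally show "norm (S x - S y) \<le> (4 * M + 1) / r * norm (x - y)" .
  qed
qed

end
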